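(* For each $n$ let $r_\star=r_\star(n)$ be an integer maximising $q_n^r$ over $r$. Then: (i) if $r$ is an integer with $r=r_\star+c\sqrt n$ for some $c\in[-\sqrt{\log n},\sqrt{\log n}]$, then \[ q_n^r = \exp\!\left(-\frac{5\sqrt5\,c^2}{2}+o(1)\right) q_n^{r_\star}, \] where $o(1)\to 0$ as $n\to\infty$; (ii) the number of sets $A\in Q(P_n)$ with $\big||A|-r_\star\big|>\sqrt{n\log n}$ is \[ O\!\left(n\exp\!\left(-\frac{5\sqrt5}{2}\log n\right) q_n^{r_\star}\right)=o\big(q_n^{r_\star}\big). \]
   Context: $Q(P_n)$ is the family of subsets of $[n]=\{1,\dots,n\}$ containing no two consecutive integers, $Q^{(r)}(P_n)$ its members of size $r$, and $q_n^r=|Q^{(r)}(P_n)|$. *)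

theory Defs
  imports Complex_Main "HOL-Library.Landau_Symbols"
begin

definition QP :: "nat \<Rightarrow> nat set set" where
  "QP n = {A. A \<subseteq> {1..n} \<and> (\<forall>i\<in>A. Suc i \<notin> A)}"

definition qnr :: "nat \<Rightarrow> int \<Rightarrow> nat" where
  "qnr n r = card {A \<in> QP n. int (card A) = r}"

end

theory Submission
  imports Defs "HOL-Real_Asymp.Real_Asymp"
begin

text \<open>
  Splitting on the largest element gives a Pascal-type recursion, whence
  \<open>q(n,r) = (n + 1 - r choose r)\<close> and
  \<open>q(n,r+1) / q(n,r) = (n - 2r)(n - 2r + 1) / ((r + 1)(n - r + 1))\<close>.
  This ratio crosses 1 near \<open>r = \<alpha>n\<close>, \<open>\<alpha> = (5 - sqrt 5)/10\<close>, so the maximiser \<open>r\<^sub>*\<close> lies within 1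
  of \<open>\<alpha>n\<close>, and expanding the logarithm of the ratio to first order gives
  \<open>ln (q(n,r+1) / q(n,r)) = -\<kappa>(r - \<alpha>n)/n + O(1/n + (|r - \<alpha>n| + 1)^2/n^2)\<close> with \<open>\<kappa> = 5 sqrt 5\<close>.
  Summed over the window \<open>|r - r\<^sub>*| \<le> K = sqrt (n log n)\<close> the errors total
  \<open>O(K^3/n^2 + K/n) = o(1)\<close>, which is part (i). Outside the window \<open>q(n,r)\<close> is unimodal, hence at
  most its value at the edge of the window, \<open>O(n^(-5 sqrt 5/2) q(n,r\<^sub>*))\<close>; at most \<open>n + 1\<close> sizes
  contribute, which gives part (ii).
\<close>

section \<open>The closed form of \<open>q(n,r)\<close>\<close>

lemma finite_QP: "finite (QP n)"
  by (rule finite_subset[of _ "Pow {1..n}"]) (auto simp: QP_def)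

lemma finite_QP_member: "A \<in> QP n \<Longrightarrow> finite A"
  unfolding QP_def using finite_subset by blast

lemma QP_card_0: "{A \<in> QP n. card A = 0} = {{}}"
proof -
  have "A = {}" if "A \<in> QP n" "card A = 0" for A
    using that finite_QP_member[OF that(1)] by simp
  moreover have "{} \<in> QP n" by (simp add: QP_def)
  ultimately show ?thesis by auto
qed

text \<open>For \<open>n = 0\<close> the truncated \<open>n - 1 = 0\<close> still gives the right count: \<open>QP 0 = {{}}\<close>.\<close>

lemma QP_Suc_card_Suc:
  "{A \<in> QP (Suc n). card A = Suc k} =
   {A \<in> QP n. card A = Suc k} \<union> insert (Suc n) ` {B \<in> QP (n - 1). card B = k}"
    (is "?L = ?R")
proof
  show "?L \<subseteq> ?R"
  proof
    fix A assume A: "A \<in> ?L"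
    then have "finite A" using finite_QP_member by blast
    show "A \<in> ?R"
    proof (cases "Suc n \<in> A")
      case False
      then show ?thesis using A by (auto simp: QP_def subset_iff le_Suc_eq)
    next
      case True
      then have "n \<notin> A" using A by (auto simp: QP_def)
      have "A - {Suc n} \<subseteq> {1..n - 1}"
      proof
        fix t assume t: "t \<in> A - {Suc n}"
        then have "1 \<le> t" "t \<le> Suc n" "t \<noteq> n" using A \<open>n \<notin> A\<close> by (auto simp: QP_def)
        then show "t \<in> {1..n - 1}" using t by auto
      qed
      moreover have "\<forall>i \<in> A - {Suc n}. Suc i \<notin> A - {Suc n}" using A by (auto simp: QP_def)
      moreover have "card (A - {Suc n}) = k" using A True \<open>finite A\<close> by simp
      ultimately have "A - {Suc n} \<in> {B \<in> QP (n - 1). card B = k}" by (simp add: QP_def)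
      then show ?thesis using True by (auto intro!: image_eqI[of _ _ "A - {Suc n}"])
    qed
  qed
  show "?R \<subseteq> ?L"
  proof
    fix A assume "A \<in> ?R"
    then consider "A \<in> {A \<in> QP n. card A = Suc k}"
      | B where "B \<in> QP (n - 1)" "card B = k" "A = insert (Suc n) B" by blast
    then show "A \<in> ?L"
    proof cases
      case 1
      then show ?thesis by (auto simp: QP_def subset_iff)
    next
      case 2
      then have "finite B" "Suc n \<notin> B" using finite_QP_member[of B "n - 1"] by (auto simp: QP_def)
      then show ?thesis using 2 by (auto simp: QP_def subset_iff)
    qed
  qed
qed

lemma card_QP_eq_choose: "card {A \<in> QP n. card A = k} = (n + 1 - k) choose k"
proof (induction n arbitrary: k rule: less_induct)
  case (less n)
  show ?case
  proof (cases n)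
    case 0
    have QP_0: "{A \<in> QP 0. card A = k} = (if k = 0 then {{}} else {})" by (auto simp: QP_def)
    show ?thesis unfolding 0 QP_0 by (cases k) simp_all
  next
    case (Suc m)
    show ?thesis
    proof (cases k)
      case 0
      then show ?thesis by (simp add: QP_card_0)
    next
      case (Suc j)
      have "Suc m \<notin> {1..m - 1}" by simp
      then have "inj_on (insert (Suc m)) (Pow {1..m - 1})"
        by (intro inj_onI) (metis PowD insert_ident subsetD)
      then have "inj_on (insert (Suc m)) {B \<in> QP (m - 1). card B = j}"
        by (rule inj_on_subset) (auto simp: QP_def)
      moreover have "{A \<in> QP m. card A = Suc j} \<inter> insert (Suc m) ` {B \<in> QP (m - 1). card B = j} = {}"
        by (auto simp: QP_def)
      ultimately have "card {A \<in> QP n. card A = k}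
          = card {A \<in> QP m. card A = Suc j} + card {B \<in> QP (m - 1). card B = j}"
        unfolding \<open>n = Suc m\<close> \<open>k = Suc j\<close> QP_Suc_card_Suc using finite_QP
        by (subst card_Un_disjoint) (auto simp: card_image)
      also have "\<dots> = (m - j choose Suc j) + (m - 1 + 1 - j choose j)"
        using less \<open>n = Suc m\<close> by simp
      also have "\<dots> = n + 1 - k choose k"
        using \<open>n = Suc m\<close> \<open>k = Suc j\<close> by (cases m; cases "j \<le> m") (auto simp: Suc_diff_le)
      finally show ?thesis .
    qed
  qed
qed

lemma qnr_eq_choose: "qnr n r = (if r < 0 then 0 else (n + 1 - nat r) choose nat r)"
proof -
  have "{A \<in> QP n. int (card A) = r} = (if r < 0 then {} else {A \<in> QP n. card A = nat r})"
    by auto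
  then show ?thesis by (simp add: qnr_def card_QP_eq_choose)
qed

lemma qnr_pos_iff: "0 < qnr n r \<longleftrightarrow> 0 \<le> r \<and> 2 * r \<le> int n + 1"
  by (auto simp: qnr_eq_choose)

lemma qnr_0: "qnr n 0 = 1"
  by (simp add: qnr_eq_choose)

lemma binomial_step_ratio:
  "((k + d) choose (k + 1)) * (k + 1) * (k + d + 1) = ((k + d + 1) choose k) * (d + 1) * d"
proof -
  have "((k + d) choose (k + 1)) * (k + 1) * (k + d + 1)
      = (k + d + 1) * (Suc k * ((k + d) choose Suc k))"
    by (simp add: mult_ac)
  also have "\<dots> = (k + d + 1) * ((k + d) * ((k + d - 1) choose k))"
    by (simp only: binomial_absorption)
  also have "\<dots> = (k + d + 1) * (d * ((k + d) choose k))"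
    using binomial_absorb_comp[of "k + d" k] by simp
  also have "\<dots> = d * ((k + d + 1) * ((k + d) choose k))"
    by (simp only: mult_ac)
  also have "\<dots> = d * ((d + 1) * ((k + d + 1) choose k))"
    using binomial_absorb_comp[of "k + d + 1" k] by simp
  finally show ?thesis by (simp only: mult_ac)
qed

definition ratio_num :: "real \<Rightarrow> real \<Rightarrow> real" where
  "ratio_num N x = (N - 2 * x) * (N - 2 * x + 1)"

definition ratio_den :: "real \<Rightarrow> real \<Rightarrow> real" where
  "ratio_den N x = (x + 1) * (N - x + 1)"

lemma qnr_Suc_ratio:
  assumes "0 \<le> j" "2 * j \<le> int n"
  shows "real (qnr n (j + 1)) * ratio_den n j = real (qnr n j) * ratio_num n j"
proof -
  obtain k d where k: "j = int k" and n: "n = 2 * k + d"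
    using assms by (metis add_diff_inverse_nat nat_0_le nat_le_iff not_le mult_2 nat_int_add)
  then have "qnr n (j + 1) = (k + d) choose (k + 1)" "qnr n j = (k + d + 1) choose k"
    by (simp_all add: qnr_eq_choose nat_add_distrib)
  moreover have "real (((k + d) choose (k + 1)) * (k + 1) * (k + d + 1))
      = real (((k + d + 1) choose k) * (d + 1) * d)"
    by (simp only: binomial_step_ratio)
  ultimately show ?thesis
    unfolding ratio_num_def ratio_den_def k n by (simp add: algebra_simps)
qed

section \<open>Location of the mode\<close>

text \<open>\<open>\<alpha>\<close> is the root in \<open>(0, 1/2)\<close> of \<open>(1 - 2\<alpha>)^2 = \<alpha>(1 - \<alpha>)\<close>, where the leading terms of
  \<open>ratio_num\<close> and \<open>ratio_den\<close> at \<open>x = \<alpha>N\<close> agree.\<close>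

definition \<alpha> :: real where "\<alpha> = (5 - sqrt 5) / 10"

lemma sqrt_5_bounds: "11/5 < sqrt (5::real)" "sqrt (5::real) < 9/4"
  by (rule real_less_rsqrt real_less_lsqrt; simp add: power2_eq_square)+

lemma \<alpha>_bounds: "27/100 < \<alpha>" "\<alpha> < 28/100"
  using sqrt_5_bounds by (auto simp: \<alpha>_def)

lemma one_minus_two_\<alpha>: "1 - 2 * \<alpha> = sqrt 5 / 5"
  by (simp add: \<alpha>_def field_simps)

lemma \<alpha>_one_minus_\<alpha>: "\<alpha> * (1 - \<alpha>) = 1 / 5"
  by (simp add: \<alpha>_def field_simps algebra_simps)

lemma \<alpha>_mult_le_half: "0 \<le> N \<Longrightarrow> \<alpha> * N \<le> N / 2"
  using mult_right_mono[of \<alpha> "1/2" N] \<alpha>_bounds by simp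

lemma ratio_den_mono:
  assumes "y \<le> x" "x + y \<le> N"
  shows "ratio_den N y \<le> ratio_den N x"
proof -
  have "ratio_den N x - ratio_den N y = (x - y) * (N - x - y)"
    by (simp add: ratio_den_def algebra_simps)
  moreover have "0 \<le> (x - y) * (N - x - y)" using assms by simp
  ultimately show ?thesis by linarith
qed

lemma ratio_den_at_\<alpha>: "ratio_den N (\<alpha> * N) = N\<^sup>2 / 5 + N + 1"
proof -
  have "ratio_den N (\<alpha> * N) = \<alpha> * (1 - \<alpha>) * N\<^sup>2 + N + 1"
    by (simp add: ratio_den_def algebra_simps power2_eq_square)
  then show ?thesis by (simp add: \<alpha>_one_minus_\<alpha>)
qed

lemma ratio_num_less_den:
  assumes "\<alpha> * N \<le> x" "2 * x \<le> N"
  shows "ratio_num N x < ratio_den N x"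
proof -
  have "0 \<le> (1 - 2 * \<alpha>) * N" using assms by (simp add: algebra_simps)
  then have N: "0 \<le> N" using \<alpha>_bounds by (simp add: zero_le_mult_iff)
  have "sqrt 5 / 5 * N = N - 2 * (\<alpha> * N)"
    unfolding one_minus_two_\<alpha>[symmetric] by (simp add: algebra_simps)
  then have "N - 2 * x \<le> sqrt 5 / 5 * N" using assms(1) by linarith
  then have "ratio_num N x \<le> (sqrt 5 / 5 * N) * (sqrt 5 / 5 * N + 1)"
    unfolding ratio_num_def using assms(2) by (intro mult_mono) auto
  also have "\<dots> = N\<^sup>2 / 5 + sqrt 5 / 5 * N"
    by (simp add: field_simps power2_eq_square)
  also have "\<dots> < ratio_den N (\<alpha> * N)"
  proof -
    have "sqrt 5 / 5 * N \<le> 1 * N" using N sqrt_5_bounds by (intro mult_right_mono) auto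
    then show ?thesis unfolding ratio_den_at_\<alpha> by linarith
  qed
  also have "\<dots> \<le> ratio_den N x"
    using assms \<alpha>_mult_le_half[OF N] by (intro ratio_den_mono) auto
  finally show ?thesis .
qed

lemma ratio_den_less_num:
  assumes "x + 1 \<le> \<alpha> * N" "0 \<le> x"
  shows "ratio_den N x < ratio_num N x"
proof -
  have "0 < \<alpha> * N" using assms by linarith
  then have N: "0 \<le> N" using \<alpha>_bounds by (simp add: zero_less_mult_iff)
  have "ratio_den N x \<le> ratio_den N (\<alpha> * N)"
    using assms \<alpha>_mult_le_half[OF N] by (intro ratio_den_mono) auto
  also have "\<dots> < (sqrt 5 / 5 * N + 2) * (sqrt 5 / 5 * N + 3)"
  proof -
    have "(sqrt 5 / 5 * N + 2) * (sqrt 5 / 5 * N + 3) = N\<^sup>2 / 5 + sqrt 5 * N + 6"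
      by (simp add: field_simps power2_eq_square)
    moreover have "1 * N \<le> sqrt 5 * N" using N sqrt_5_bounds by (intro mult_right_mono) auto
    ultimately show ?thesis unfolding ratio_den_at_\<alpha> by linarith
  qed
  also have "\<dots> \<le> ratio_num N x"
  proof -
    have "sqrt 5 / 5 * N = N - 2 * (\<alpha> * N)"
      unfolding one_minus_two_\<alpha>[symmetric] by (simp add: algebra_simps)
    then have "sqrt 5 / 5 * N + 2 \<le> N - 2 * x" using assms(1) by linarith
    moreover have "0 \<le> sqrt 5 / 5 * N" using N by simp
    ultimately show ?thesis unfolding ratio_num_def by (intro mult_mono) auto
  qed
  finally show ?thesis .
qed

lemma qnr_Suc_less:
  assumes "\<alpha> * n \<le> j" and pos: "0 < qnr n j"
  shows "qnr n (j + 1) < qnr n j"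
proof (cases "2 * j \<le> int n")
  case True
  have "0 \<le> j" using pos by (simp add: qnr_pos_iff)
  have "2 * real_of_int j \<le> real n" using True by linarith
  then have "ratio_num n j < ratio_den n j" "0 < ratio_den n j"
    using assms(1) \<open>0 \<le> j\<close> ratio_num_less_den by (auto simp: ratio_den_def)
  then have "real (qnr n (j + 1)) * ratio_den n j < real (qnr n j) * ratio_den n j"
    using qnr_Suc_ratio[OF \<open>0 \<le> j\<close> True] pos by simp
  then show ?thesis using \<open>0 < ratio_den n j\<close> by simp
next
  case False
  then have "qnr n (j + 1) = 0" using qnr_pos_iff[of n "j + 1"] by simp
  then show ?thesis using pos by simp
qed

lemma qnr_Suc_le:
  assumes "\<alpha> * n \<le> j"
  shows "qnr n (j + 1) \<le> qnr n j"
proof (cases "0 < qnr n j")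
  case False
  have "0 \<le> \<alpha> * n" using \<alpha>_bounds by simp
  then have "0 \<le> j" using assms by linarith
  then have "qnr n (j + 1) = 0" using False qnr_pos_iff[of n j] qnr_pos_iff[of n "j + 1"] by simp
  then show ?thesis by simp
qed (use qnr_Suc_less[OF assms] in simp)

lemma qnr_less_Suc:
  assumes "j + 1 \<le> \<alpha> * n" "0 \<le> j"
  shows "qnr n j < qnr n (j + 1)"
proof -
  have "2 * real_of_int j \<le> real n" using assms \<alpha>_mult_le_half[of n] by simp
  then have "2 * j \<le> int n" by linarith
  have "ratio_den n j < ratio_num n j" "0 < ratio_den n j"
    using assms ratio_den_less_num \<open>2 * real_of_int j \<le> real n\<close> by (auto simp: ratio_den_def)
  then have "real (qnr n j) * ratio_den n j < real (qnr n (j + 1)) * ratio_den n j"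
    using qnr_Suc_ratio[OF assms(2) \<open>2 * j \<le> int n\<close>] assms(2) \<open>2 * j \<le> int n\<close>
    by (simp add: qnr_pos_iff)
  then show ?thesis using \<open>0 < ratio_den n j\<close> by simp
qed

lemma qnr_le_Suc: "j + 1 \<le> \<alpha> * n \<Longrightarrow> qnr n j \<le> qnr n (j + 1)"
  using qnr_less_Suc[of j n] qnr_pos_iff[of n j] by (cases "0 \<le> j") auto

lemma qnr_antimono_above:
  assumes "\<alpha> * n \<le> a" "a \<le> b"
  shows "qnr n b \<le> qnr n a"
  using assms(2)
proof (induction b rule: int_ge_induct)
  case (step i)
  then show ?case using assms(1) qnr_Suc_le[of n i] by linarith
qed simp

lemma qnr_mono_below:
  assumes "b \<le> \<alpha> * n" "a \<le> b"
  shows "qnr n a \<le> qnr n b"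
  using assms(2)
proof (induction a rule: int_le_induct)
  case (step i)
  then show ?case using assms(1) qnr_le_Suc[of "i - 1" n] by simp
qed simp

lemma mode_near_\<alpha>:
  assumes max: "\<And>r. qnr n r \<le> qnr n R"
  shows "\<bar>R - \<alpha> * n\<bar> \<le> 1" "0 < qnr n R"
proof -
  show pos: "0 < qnr n R" using max[of 0] by (simp add: qnr_0)
  have "R \<le> \<alpha> * n + 1"
  proof (rule ccontr)
    assume "\<not> R \<le> \<alpha> * n + 1"
    moreover have "0 \<le> \<alpha> * n" using \<alpha>_bounds by simp
    ultimately have "\<alpha> * n \<le> R - 1" "0 \<le> R - 1" by linarith+
    moreover have "2 * (R - 1) \<le> int n + 1" using pos qnr_pos_iff[of n R] by simp
    ultimately have "qnr n R < qnr n (R - 1)"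
      using qnr_Suc_less[of n "R - 1"] qnr_pos_iff[of n "R - 1"] by simp
    then show False using max[of "R - 1"] by simp
  qed
  moreover have "\<alpha> * n - 1 \<le> R"
  proof (rule ccontr)
    assume "\<not> \<alpha> * n - 1 \<le> R"
    then have "qnr n R < qnr n (R + 1)"
      using qnr_less_Suc[of R n] pos by (simp add: qnr_pos_iff)
    then show False using max[of "R + 1"] by simp
  qed
  ultimately show "\<bar>R - \<alpha> * n\<bar> \<le> 1" by linarith
qed

section \<open>The Gaussian profile near the mode\<close>

definition \<kappa> :: real where "\<kappa> = 5 * sqrt 5"

lemma ln_mult_one_plus_approx:
  fixes y t :: real
  assumes "0 < y" "\<bar>t\<bar> \<le> 1/2"
  shows "0 < y * (1 + t)" "\<bar>ln (y * (1 + t)) - (ln y + t)\<bar> \<le> 2 * t\<^sup>2"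
proof -
  show "0 < y * (1 + t)" using assms by simp
  then have "ln (y * (1 + t)) = ln y + ln (1 + t)" using assms by (simp add: ln_mult_pos)
  then show "\<bar>ln (y * (1 + t)) - (ln y + t)\<bar> \<le> 2 * t\<^sup>2"
    using abs_ln_one_plus_x_minus_x_bound[OF assms(2)] by simp
qed

lemma abs_affine_div_le:
  fixes a b d N :: real
  assumes "\<bar>a\<bar> \<le> 5" "\<bar>b\<bar> \<le> 5" "0 < N"
  shows "\<bar>(a + b * d) / N\<bar> \<le> 5 * (\<bar>d\<bar> + 1) / N"
proof -
  have "\<bar>b\<bar> * \<bar>d\<bar> \<le> 5 * \<bar>d\<bar>" using assms(2) by (simp add: mult_right_mono)
  then have "\<bar>a + b * d\<bar> \<le> 5 + 5 * \<bar>d\<bar>"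
    using assms(1) abs_triangle_ineq[of a "b * d"] by (simp add: abs_mult)
  then show ?thesis using assms(3) by (simp add: abs_divide divide_right_mono algebra_simps)
qed

lemma ln_ratio_approx:
  fixes N x :: real
  defines "d \<equiv> x - \<alpha> * N"
  assumes N: "0 < N" and near: "10 * (\<bar>d\<bar> + 1) \<le> N"
  shows "0 < ratio_num N x" "0 < ratio_den N x"
    "\<bar>ln (ratio_num N x) - ln (ratio_den N x) - (- \<kappa> * d + sqrt 5 - 5) / N\<bar>
       \<le> 200 * (\<bar>d\<bar> + 1)\<^sup>2 / N\<^sup>2"
proof -
  define s where "s = sqrt (5::real)"
  have s: "s * s = 5" "11/5 < s" "s < 9/4" using sqrt_5_bounds by (auto simp: s_def)
  have s_s: "s * (s * y) = 5 * y" for y using s(1) by (simp add: mult.assoc[symmetric])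
  define e where "e = 5 * (\<bar>d\<bar> + 1) / N"
  have e: "e \<le> 1/2" using N near by (simp add: e_def field_simps)
  \<comment> \<open>each factor is its value at \<open>x = \<alpha>N\<close> times \<open>1 + t\<^sub>i\<close>, with \<open>|t\<^sub>i| \<le> 5(|d| + 1)/N\<close>\<close>
  define t1 where "t1 = (0 + (- 2 * s) * d) / N"
  define t2 where "t2 = (s + (- 2 * s) * d) / N"
  define t3 where "t3 = ((5 - s) / 2 + (- (5 - s) / 2) * d) / N"
  define t4 where "t4 = ((5 + s) / 2 + ((5 + s) / 2) * d) / N"
  have t: "\<bar>t1\<bar> \<le> e" "\<bar>t2\<bar> \<le> e" "\<bar>t3\<bar> \<le> e" "\<bar>t4\<bar> \<le> e"
    unfolding t1_def t2_def t3_def t4_def e_def using s N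
    by (intro abs_affine_div_le; simp)+
  have \<alpha>: "\<alpha> = (5 - s) / 10" by (simp add: \<alpha>_def s_def)
  have eqs: "N - 2 * x = (s / 5 * N) * (1 + t1)" "N - 2 * x + 1 = (s / 5 * N) * (1 + t2)"
      "N - x + 1 = ((5 + s) / 10 * N) * (1 + t3)" "x + 1 = (\<alpha> * N) * (1 + t4)"
    unfolding t1_def t2_def t3_def t4_def d_def \<alpha> using N s
    by (simp_all add: field_simps) (simp_all add: algebra_simps s_s)
  have y: "0 < s / 5 * N" "0 < (5 + s) / 10 * N" "0 < \<alpha> * N"
    using N s \<alpha>_bounds by auto
  note approx = ln_mult_one_plus_approx[OF y(1) t(1)[THEN order_trans, OF e]]
    ln_mult_one_plus_approx[OF y(1) t(2)[THEN order_trans, OF e]]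
    ln_mult_one_plus_approx[OF y(2) t(3)[THEN order_trans, OF e]]
    ln_mult_one_plus_approx[OF y(3) t(4)[THEN order_trans, OF e]]
  have num: "ratio_num N x = (s / 5 * N * (1 + t1)) * (s / 5 * N * (1 + t2))"
    by (simp only: ratio_num_def eqs(1)[symmetric] eqs(2)[symmetric])
  have den: "ratio_den N x = (\<alpha> * N * (1 + t4)) * ((5 + s) / 10 * N * (1 + t3))"
    by (simp only: ratio_den_def eqs(3)[symmetric] eqs(4)[symmetric])
  show "0 < ratio_num N x" "0 < ratio_den N x"
    unfolding num den using approx by simp_all
  have "(s / 5 * N) * (s / 5 * N) = ((5 + s) / 10 * N) * (\<alpha> * N)"
    unfolding \<alpha> using s by (simp add: field_simps)
  then have ln_y: "ln (s / 5 * N) + ln (s / 5 * N) = ln ((5 + s) / 10 * N) + ln (\<alpha> * N)"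
    using y by (metis ln_mult_pos)
  have lin: "t1 + t2 - t3 - t4 = (- \<kappa> * d + sqrt 5 - 5) / N"
    unfolding t1_def t2_def t3_def t4_def \<kappa>_def s_def using N by (simp add: field_simps)
  have sq: "2 * t\<^sup>2 \<le> 2 * e\<^sup>2" if "\<bar>t\<bar> \<le> e" for t
    using power_mono[OF that, of 2] by simp
  have "e\<^sup>2 = 25 * (\<bar>d\<bar> + 1)\<^sup>2 / N\<^sup>2" by (simp add: e_def power_divide power2_eq_square algebra_simps)
  moreover have "ln (ratio_num N x) - ln (ratio_den N x)
      = ln (s / 5 * N * (1 + t1)) + ln (s / 5 * N * (1 + t2))
        - ln ((5 + s) / 10 * N * (1 + t3)) - ln (\<alpha> * N * (1 + t4))"
    unfolding num den ln_mult_pos[OF approx(1,3)] ln_mult_pos[OF approx(7,5)] by simp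
  ultimately show "\<bar>ln (ratio_num N x) - ln (ratio_den N x) - (- \<kappa> * d + sqrt 5 - 5) / N\<bar>
       \<le> 200 * (\<bar>d\<bar> + 1)\<^sup>2 / N\<^sup>2"
    using approx(2,4,6,8) sq[OF t(1)] sq[OF t(2)] sq[OF t(3)] sq[OF t(4)] ln_y lin
    by (simp add: abs_le_iff)
qed

lemma \<kappa>_bounds: "0 \<le> \<kappa>" "\<kappa> \<le> 12"
  using sqrt_5_bounds by (auto simp: \<kappa>_def)

lemma near_\<alpha>_bounds:
  assumes "10 * (\<bar>j - \<alpha> * n\<bar> + 1) \<le> real n"
  shows "0 \<le> j" "2 * j < int n"
proof -
  have "27/100 * real n \<le> \<alpha> * n" "\<alpha> * n \<le> 28/100 * real n"
    using mult_right_mono[OF less_imp_le[OF \<alpha>_bounds(1)], of "real n"]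
      mult_right_mono[OF less_imp_le[OF \<alpha>_bounds(2)], of "real n"] by simp_all
  moreover have "\<bar>j - \<alpha> * n\<bar> + 1 \<le> real n / 10" using assms by simp
  then have "-(real n / 10) \<le> j - \<alpha> * n" "j - \<alpha> * n \<le> real n / 10" "1 \<le> real n / 10"
    using abs_ge_self[of "j - \<alpha> * n"] abs_ge_minus_self[of "j - \<alpha> * n"] by linarith+
  ultimately have "0 \<le> real_of_int j" "2 * real_of_int j < real n" by linarith+
  then show "0 \<le> j" "2 * j < int n" by linarith+
qed

text \<open>Part (i) says that this is almost constant on a window of width \<open>sqrt (n log n)\<close> around the mode.\<close>

definition gauss_defect :: "nat \<Rightarrow> int \<Rightarrow> real" where
  "gauss_defect n r = ln (real (qnr n r)) + \<kappa> * (r - \<alpha> * n)\<^sup>2 / (2 * real n)"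

lemma gauss_defect_step:
  assumes n: "0 < n" and near: "10 * (\<bar>j - \<alpha> * n\<bar> + 1) \<le> real n"
  shows "\<bar>gauss_defect n (j + 1) - gauss_defect n j\<bar>
           \<le> 3 / n + 200 * (\<bar>j - \<alpha> * n\<bar> + 1)\<^sup>2 / (real n)\<^sup>2"
proof -
  define d where "d = j - \<alpha> * n"
  have "0 < real n" using n by simp
  note ratio = ln_ratio_approx[of "real n" "real_of_int j", folded d_def, OF this near[folded d_def]]
  have j: "0 \<le> j" "2 * j \<le> int n" using near_\<alpha>_bounds[OF near] by simp_all
  then have pos: "0 < real (qnr n j)" by (simp add: qnr_pos_iff)
  note Suc_ratio = qnr_Suc_ratio[OF j]
  have "0 < real (qnr n (j + 1)) * ratio_den n j"
    unfolding Suc_ratio using pos ratio(1) by simp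
  then have "0 < real (qnr n (j + 1))" using ratio(2) by (simp add: zero_less_mult_iff)
  have "ln (real (qnr n (j + 1)) * ratio_den n j) = ln (real (qnr n j) * ratio_num n j)"
    unfolding Suc_ratio ..
  then have ln_step: "ln (real (qnr n (j + 1))) - ln (real (qnr n j)) = ln (ratio_num n j) - ln (ratio_den n j)"
    unfolding ln_mult_pos[OF \<open>0 < real (qnr n (j + 1))\<close> ratio(2)] ln_mult_pos[OF pos ratio(1)] by simp
  define L where "L = (- \<kappa> * d + sqrt 5 - 5) / n"
  define c where "c = sqrt 5 - 5 + \<kappa> / 2"
  have "\<kappa> * (real_of_int (j + 1) - \<alpha> * n)\<^sup>2 / (2 * real n)
      - \<kappa> * (real_of_int j - \<alpha> * n)\<^sup>2 / (2 * real n)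
      = c / n - L"
    using n by (simp add: d_def L_def c_def field_simps power2_eq_square)
  then have diff: "gauss_defect n (j + 1) - gauss_defect n j = (ln (ratio_num n j) - ln (ratio_den n j) - L) + c / n"
    unfolding gauss_defect_def using ln_step by linarith
  have "-3 \<le> c" "c \<le> 3" using sqrt_5_bounds by (simp_all add: c_def \<kappa>_def)
  then have "- 3 / n \<le> c / n" "c / n \<le> 3 / n" using divide_right_mono by force+
  then have "\<bar>c / n\<bar> \<le> 3 / n" unfolding abs_le_iff by linarith
  then show ?thesis
    unfolding diff using ratio(3)[folded L_def, unfolded d_def]
      abs_triangle_ineq[of "ln (ratio_num n j) - ln (ratio_den n j) - L" "c / n"] by linarith
qed

lemma abs_diff_le_by_steps:
  fixes F :: "int \<Rightarrow> real"
  assumes "a \<le> b" "\<And>j. a \<le> j \<Longrightarrow> j < b \<Longrightarrow> \<bar>F (j + 1) - F j\<bar> \<le> E"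
  shows "\<bar>F b - F a\<bar> \<le> real_of_int (b - a) * E"
  using assms
proof (induction b rule: int_ge_induct)
  case (step i)
  then have "\<bar>F i - F a\<bar> \<le> real_of_int (i - a) * E" "\<bar>F (i + 1) - F i\<bar> \<le> E" by auto
  then show ?case by (simp add: algebra_simps)
qed simp

definition local_error :: "nat \<Rightarrow> real \<Rightarrow> real" where
  "local_error n K = K * (3 / n + 200 * (K + 2)\<^sup>2 / (real n)\<^sup>2) + 12 * K / n"

lemma ln_qnr_local:
  assumes max: "\<And>r. qnr n r \<le> qnr n R" and n: "0 < n" and K: "0 \<le> K" "10 * (K + 3) \<le> real n"
    and r: "\<bar>real_of_int (r - R)\<bar> \<le> K"
  shows "0 < qnr n r"
    "\<bar>ln (real (qnr n r)) - ln (real (qnr n R)) + \<kappa> * (real_of_int (r - R))\<^sup>2 / (2 * real n)\<bar>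
       \<le> local_error n K"
proof -
  have R: "\<bar>R - \<alpha> * n\<bar> \<le> 1" using mode_near_\<alpha>[OF max] by simp
  define E where "E = 3 / n + 200 * (K + 2)\<^sup>2 / (real n)\<^sup>2"
  have window: "10 * (\<bar>j - \<alpha> * n\<bar> + 1) \<le> real n" if "\<bar>j - \<alpha> * n\<bar> \<le> K + 1" for j
    using that K(2) by simp
  have step: "\<bar>gauss_defect n (j + 1) - gauss_defect n j\<bar> \<le> E" if "\<bar>j - \<alpha> * n\<bar> \<le> K + 1" for j
  proof -
    have "(\<bar>j - \<alpha> * n\<bar> + 1)\<^sup>2 \<le> (K + 2)\<^sup>2" using that by (intro power_mono) auto
    then have "200 * (\<bar>j - \<alpha> * n\<bar> + 1)\<^sup>2 / (real n)\<^sup>2 \<le> 200 * (K + 2)\<^sup>2 / (real n)\<^sup>2"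
      by (simp add: divide_right_mono)
    then show ?thesis using gauss_defect_step[OF n window[OF that]] unfolding E_def by linarith
  qed
  have r_window: "\<bar>r - \<alpha> * n\<bar> \<le> K + 1" using r R by linarith
  show "0 < qnr n r" using near_\<alpha>_bounds[OF window[OF r_window]] by (simp add: qnr_pos_iff)
  have "\<bar>gauss_defect n (max r R) - gauss_defect n (min r R)\<bar> \<le> (max r R - min r R) * E"
  proof (rule abs_diff_le_by_steps)
    fix j assume "min r R \<le> j" "j < max r R"
    then have "\<bar>j - \<alpha> * n\<bar> \<le> K + 1" using r R by linarith
    then show "\<bar>gauss_defect n (j + 1) - gauss_defect n j\<bar> \<le> E" by (rule step)
  qed simp
  also have "\<dots> \<le> K * E"
    using r n by (intro mult_right_mono) (auto simp: E_def)
  finally have defect: "\<bar>gauss_defect n r - gauss_defect n R\<bar> \<le> K * E"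
    by (cases "r \<le> R") (auto simp: max_def min_def abs_minus_commute)
  define e where "e = R - \<alpha> * n"
  have "ln (real (qnr n r)) - ln (real (qnr n R)) + \<kappa> * (real_of_int (r - R))\<^sup>2 / (2 * real n)
      = (gauss_defect n r - gauss_defect n R) - \<kappa> * real_of_int (r - R) * e / n"
    unfolding gauss_defect_def e_def using n by (simp add: field_simps power2_eq_square)
  moreover have "\<bar>\<kappa> * real_of_int (r - R) * e / n\<bar> \<le> 12 * K / n"
  proof -
    have "\<bar>\<kappa> * real_of_int (r - R) * e\<bar> \<le> 12 * K * 1"
      unfolding abs_mult using \<kappa>_bounds r R by (intro mult_mono) (auto simp: e_def)
    then show ?thesis using n by (simp add: abs_divide divide_right_mono)
  qed
  ultimately show "\<bar>ln (real (qnr n r)) - ln (real (qnr n R)) + \<kappa> * (real_of_int (r - R))\<^sup>2 / (2 * real n)\<bar>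
      \<le> local_error n K"
    using defect unfolding local_error_def E_def[symmetric] by linarith
qed

section \<open>Tails\<close>

lemma local_error_ge: "0 \<le> K \<Longrightarrow> 12 * K / n \<le> local_error n K"
  unfolding local_error_def by simp

lemma qnr_le_at_distance:
  assumes max: "\<And>r. qnr n r \<le> qnr n R" and n: "0 < n" and K: "1 \<le> K" "10 * (K + 3) \<le> real n"
    and err: "local_error n K \<le> 1" and r: "\<bar>real_of_int (r - R)\<bar> \<le> K" "K - 1 \<le> \<bar>real_of_int (r - R)\<bar>"
  shows "real (qnr n r) \<le> exp (2 - \<kappa> * K\<^sup>2 / (2 * real n)) * real (qnr n R)"
proof -
  have "0 \<le> K" using K(1) by simp
  note local = ln_qnr_local[OF max n this K(2) r(1)]
  define k where "k = \<bar>real_of_int (r - R)\<bar>"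
  have "K\<^sup>2 - 2 * K \<le> k\<^sup>2"
    using power_mono[of "K - 1" k 2] r K by (simp add: k_def power2_eq_square algebra_simps)
  then have "\<kappa> * (K\<^sup>2 - 2 * K) / (2 * real n) \<le> \<kappa> * k\<^sup>2 / (2 * real n)"
    using \<kappa>_bounds by (intro divide_right_mono mult_left_mono) auto
  moreover have "\<kappa> * (K\<^sup>2 - 2 * K) / (2 * real n) = \<kappa> * K\<^sup>2 / (2 * real n) - \<kappa> * K / n"
    using n by (simp add: field_simps)
  moreover have "\<kappa> * K / n \<le> 12 * K / n"
    using \<kappa>_bounds K by (intro divide_right_mono mult_right_mono) auto
  moreover have "12 * K / n \<le> 1" using local_error_ge[of K n] K err by linarith
  moreover have "ln (real (qnr n r)) - ln (real (qnr n R)) + \<kappa> * k\<^sup>2 / (2 * real n) \<le> 1"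
    using abs_le_D1[OF local(2)] err by (simp add: k_def)
  ultimately have "ln (real (qnr n r)) \<le> ln (real (qnr n R)) + (2 - \<kappa> * K\<^sup>2 / (2 * real n))"
    by linarith
  then have "real (qnr n r) \<le> exp (ln (real (qnr n R)) + (2 - \<kappa> * K\<^sup>2 / (2 * real n)))"
    using local(1) K by (metis exp_le_cancel_iff exp_ln of_nat_0_less_iff order.trans order_refl)
  then show ?thesis using mode_near_\<alpha>(2)[OF max] by (simp add: exp_add mult.commute)
qed

lemma qnr_tail_le:
  assumes max: "\<And>r. qnr n r \<le> qnr n R" and n: "0 < n" and K: "1 \<le> K" "10 * (K + 3) \<le> real n"
    and err: "local_error n K \<le> 1" and r: "K < \<bar>real_of_int (r - R)\<bar>"
  shows "real (qnr n r) \<le> exp (2 - \<kappa> * K\<^sup>2 / (2 * real n)) * real (qnr n R)"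
proof -
  have R: "\<bar>R - \<alpha> * n\<bar> \<le> 1" using mode_near_\<alpha>[OF max] by simp
  define f where "f = \<lfloor>K\<rfloor>"
  have f: "f \<le> K" "K - 1 < f" "1 \<le> f" unfolding f_def using K by linarith+
  note at_distance = qnr_le_at_distance[OF max n K err]
  show ?thesis
  proof (cases "R < r")
    case True
    then have "qnr n r \<le> qnr n (R + f)"
      using R f r by (intro qnr_antimono_above) auto
    moreover have "real (qnr n (R + f)) \<le> exp (2 - \<kappa> * K\<^sup>2 / (2 * real n)) * real (qnr n R)"
      using f by (intro at_distance) auto
    ultimately show ?thesis by linarith
  next
    case False
    then have "qnr n r \<le> qnr n (R - f)"
      using R f r by (intro qnr_mono_below) auto
    moreover have "real (qnr n (R - f)) \<le> exp (2 - \<kappa> * K\<^sup>2 / (2 * real n)) * real (qnr n R)"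
      using f by (intro at_distance) auto
    ultimately show ?thesis by linarith
  qed
qed

lemma card_far_from_mode_le:
  assumes max: "\<And>r. qnr n r \<le> qnr n R" and n: "0 < n" and K: "1 \<le> K" "10 * (K + 3) \<le> real n"
    and err: "local_error n K \<le> 1"
  shows "real (card {A \<in> QP n. \<bar>real (card A) - R\<bar> > K})
     \<le> (real n + 1) * (exp (2 - \<kappa> * K\<^sup>2 / (2 * real n)) * real (qnr n R))"
proof -
  define M where "M = {m \<in> {0..n}. K < \<bar>real m - R\<bar>}"
  define B where "B = exp (2 - \<kappa> * K\<^sup>2 / (2 * real n)) * real (qnr n R)"
  have "card A \<le> n" if "A \<in> QP n" for A
    using that card_mono[of "{1..n}" A] by (simp add: QP_def)
  then have "{A \<in> QP n. \<bar>real (card A) - R\<bar> > K} \<subseteq> (\<Union>m\<in>M. {A \<in> QP n. card A = m})"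
    unfolding M_def by auto
  then have "card {A \<in> QP n. \<bar>real (card A) - R\<bar> > K} \<le> card (\<Union>m\<in>M. {A \<in> QP n. card A = m})"
    by (rule card_mono[rotated]) (simp add: finite_QP M_def)
  also have "\<dots> \<le> (\<Sum>m\<in>M. qnr n (int m))"
    unfolding qnr_def using card_UN_le[of M] by (simp add: M_def)
  finally have "real (card {A \<in> QP n. \<bar>real (card A) - R\<bar> > K}) \<le> (\<Sum>m\<in>M. real (qnr n (int m)))"
    by (simp flip: of_nat_sum)
  also have "\<dots> \<le> real (card M) * B"
    using qnr_tail_le[OF max n K err] by (intro sum_bounded_above) (simp add: M_def B_def)
  also have "\<dots> \<le> (real n + 1) * B"
  proof -
    have "M \<subseteq> {0..n}" by (auto simp: M_def)
    then have "card M \<le> n + 1" using card_mono[of "{0..n}" M] by simp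
    then show ?thesis by (intro mult_right_mono) (auto simp: B_def)
  qed
  finally show ?thesis unfolding B_def .
qed

section \<open>Asymptotics\<close>

lemma tendsto_real_mult_exp_neg_ln:
  assumes "1 < a"
  shows "((\<lambda>n::nat. real n * exp (- a * ln (real n))) \<longlongrightarrow> 0) at_top"
proof -
  have "((\<lambda>n::nat. real n powr (1 - a)) \<longlongrightarrow> 0) at_top"
    using assms by (intro tendsto_neg_powr filterlim_real_sequentially) auto
  moreover have "\<forall>\<^sub>F n in at_top. real n powr (1 - a) = real n * exp (- a * ln (real n))"
    using eventually_gt_at_top[of "0::nat"]
    by eventually_elim (simp add: powr_def left_diff_distrib exp_diff exp_minus field_simps)
  ultimately show ?thesis by (rule Lim_transform_eventually)
qed

lemma sqrt_n_ln_n_eventually: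
  "\<forall>\<^sub>F n in at_top. 1 \<le> sqrt (real n * ln (real n))"
  "\<forall>\<^sub>F n in at_top. 10 * (sqrt (real n * ln (real n)) + 3) \<le> real n"
  "((\<lambda>n. local_error n (sqrt (real n * ln (real n)))) \<longlongrightarrow> 0) at_top"
  unfolding local_error_def by real_asymp+

lemma qnr_local_limit:
  fixes rs :: "nat \<Rightarrow> int"
  assumes max: "\<And>n r. qnr n r \<le> qnr n (rs n)" and "0 < \<epsilon>"
  shows "\<forall>\<^sub>F n in at_top. \<forall>r::int.
            \<bar>real_of_int (r - rs n)\<bar> \<le> sqrt (real n * ln (real n)) \<longrightarrow>
            (let c = real_of_int (r - rs n) / sqrt (real n) in
              \<exists>\<delta>. \<bar>\<delta>\<bar> \<le> \<epsilon> \<and>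
                real (qnr n r) = exp (- (5 * sqrt 5 * c\<^sup>2 / 2) + \<delta>) * real (qnr n (rs n)))"
  using sqrt_n_ln_n_eventually(1,2) order_tendstoD(2)[OF sqrt_n_ln_n_eventually(3) \<open>0 < \<epsilon>\<close>]
proof eventually_elim
  case (elim n)
  then have n: "0 < n" by (intro Nat.gr0I) simp
  show ?case
  proof (intro allI impI)
    fix r :: int
    assume r: "\<bar>real_of_int (r - rs n)\<bar> \<le> sqrt (real n * ln (real n))"
    have "0 \<le> sqrt (real n * ln (real n))" using elim(1) by linarith
    note local = ln_qnr_local[OF max[of n] n this elim(2) r]
    define \<delta> where "\<delta> = ln (real (qnr n r)) - ln (real (qnr n (rs n)))
        + \<kappa> * (real_of_int (r - rs n))\<^sup>2 / (2 * real n)"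
    have "5 * sqrt 5 * (real_of_int (r - rs n) / sqrt (real n))\<^sup>2 / 2
        = \<kappa> * (real_of_int (r - rs n))\<^sup>2 / (2 * real n)"
      by (simp add: \<kappa>_def power_divide)
    then have "exp (- (5 * sqrt 5 * (real_of_int (r - rs n) / sqrt (real n))\<^sup>2 / 2) + \<delta>) * real (qnr n (rs n))
        = real (qnr n r)"
      using local(1) elim(1) mode_near_\<alpha>(2)[OF max] by (simp add: \<delta>_def exp_diff)
    moreover have "\<bar>\<delta>\<bar> \<le> \<epsilon>" using local(2) elim(1,3) by (simp add: \<delta>_def)
    ultimately show "let c = real_of_int (r - rs n) / sqrt (real n) in
        \<exists>\<delta>. \<bar>\<delta>\<bar> \<le> \<epsilon> \<and> real (qnr n r) = exp (- (5 * sqrt 5 * c\<^sup>2 / 2) + \<delta>) * real (qnr n (rs n))"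
      unfolding Let_def by metis
  qed
qed

lemma card_far_from_mode_eventually_le:
  fixes rs :: "nat \<Rightarrow> int"
  assumes max: "\<And>n r. qnr n r \<le> qnr n (rs n)"
  shows "\<forall>\<^sub>F n in at_top.
    real (card {A \<in> QP n. \<bar>real (card A) - real_of_int (rs n)\<bar> > sqrt (real n * ln (real n))})
      \<le> 2 * exp 2 * (real n * exp (- (5 * sqrt 5 / 2) * ln (real n)) * real (qnr n (rs n)))"
  using sqrt_n_ln_n_eventually(1,2) order_tendstoD(2)[OF sqrt_n_ln_n_eventually(3) zero_less_one]
proof eventually_elim
  case (elim n)
  define K where "K = sqrt (real n * ln (real n))"
  have n: "0 < n" using elim(1) by (intro Nat.gr0I) simp
  then have "0 \<le> ln (real n)" by simp
  then have "\<kappa> * K\<^sup>2 / (2 * real n) = 5 * sqrt 5 / 2 * ln (real n)"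
    using n by (simp add: K_def \<kappa>_def)
  then have "exp (2 - \<kappa> * K\<^sup>2 / (2 * real n)) = exp 2 * exp (- (5 * sqrt 5 / 2) * ln (real n))"
    by (simp add: exp_diff exp_minus field_simps)
  then have "real (card {A \<in> QP n. \<bar>real (card A) - real_of_int (rs n)\<bar> > K})
      \<le> (real n + 1) * (exp 2 * exp (- (5 * sqrt 5 / 2) * ln (real n)) * real (qnr n (rs n)))"
    using card_far_from_mode_le[OF max[of n] n elim(1,2)[folded K_def] less_imp_le[OF elim(3), folded K_def]]
    by simp
  also have "\<dots> \<le> (2 * real n) * (exp 2 * exp (- (5 * sqrt 5 / 2) * ln (real n)) * real (qnr n (rs n)))"
    using n by (intro mult_right_mono) auto
  finally show ?case by (simp add: K_def mult_ac)
qed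

theorem mainTheorem7:
  fixes rs :: "nat \<Rightarrow> int"
  assumes rs_max: "\<And>n r. qnr n r \<le> qnr n (rs n)"
  shows "(\<forall>\<epsilon>>0. \<forall>\<^sub>F n in at_top. \<forall>r::int.
            \<bar>real_of_int (r - rs n)\<bar> \<le> sqrt (real n * ln (real n)) \<longrightarrow>
            (let c = real_of_int (r - rs n) / sqrt (real n) in
              \<exists>\<delta>. \<bar>\<delta>\<bar> \<le> \<epsilon> \<and>
                real (qnr n r) = exp (- (5 * sqrt 5 * c\<^sup>2 / 2) + \<delta>) * real (qnr n (rs n))))
       \<and> (\<lambda>n. real (card {A \<in> QP n. \<bar>real (card A) - real_of_int (rs n)\<bar> > sqrt (real n * ln (real n))}))
           \<in> O(\<lambda>n. real n * exp (- (5 * sqrt 5 / 2) * ln (real n)) * real (qnr n (rs n)))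
       \<and> (\<lambda>n. real (card {A \<in> QP n. \<bar>real (card A) - real_of_int (rs n)\<bar> > sqrt (real n * ln (real n))}))
           \<in> o(\<lambda>n. real (qnr n (rs n)))"
    (is "?local \<and> ?F \<in> O(\<lambda>n. ?H n * ?q n) \<and> _")
proof (intro conjI)
  show ?local using qnr_local_limit[OF rs_max] by blast
  show big: "?F \<in> O(\<lambda>n. ?H n * ?q n)"
    using card_far_from_mode_eventually_le[OF rs_max] by (intro bigoI) (simp add: abs_mult)
  have "?H \<in> o(\<lambda>_. 1)"
    using tendsto_real_mult_exp_neg_ln[of "5 * sqrt 5 / 2"] sqrt_5_bounds by (intro smalloI_tendsto) auto
  then have "(\<lambda>n. ?H n * ?q n) \<in> o(\<lambda>n. 1 * ?q n)" by (rule landau_o.small.mult_right)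
  then show "?F \<in> o(?q)" using big by (simp add: landau_o.big_small_trans)
qed

end
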